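(* Let $G=(V,E)$ be a finite connected graph with $n=|V|\ge2$ vertices such that the equation $DK=n\mathbf{1}_n$ admits at least one solution $K\in\mathbb{R}^n$. Then the following are equivalent: (a) $G$ is antipodal; (b) $G$ is self-centered and Bonnet–Myers sharp.
   Context: All graphs are finite, simple, connected and undirected, with the combinatorial shortest-path distance $d$. For $V=\{v_1,\dots,v_n\}$, $D=(d(v_i,v_j))_{i,j=1}^n$ is the distance matrix and $\mathbf{1}_n$ the all-ones column vector. When $DK=n\mathbf{1}_n$ has solutions, the Steinerberger curvature is a solution $K$ for which $\min_iK_i$ is maximal among all solutions (the unique solution if there is only one). $G$ is Bonnet–Myers sharp if $DK=n\mathbf{1}_n$ has a solution and its Steinerberger curvature $K$ satisfies $\min_iK_i=2/\mathrm{diam}(G)$ (equivalently, some solution $K$ has $\min_i K_i=2/\mathrm{diam}(G)$). $G$ is self-centered if for every $x\in V$ there exists $\hat x\in V$ with $d(x,\hat x)=\mathrm{diam}(G)$. For $x,y\in V$ let $[x,y]=\{z\in V: d(x,y)=d(x,z)+d(z,y)\}$; $G$ is antipodal if for every $x\in V$ there exists $\hat x\in V$ with $[x,\hat x]=V$. *)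

theory Defs
  imports Complex_Main
begin

text \<open>A finite simple graph on the vertex set V with adjacency relation E
(symmetric, irreflexive on V). Edges with an endpoint outside V are ignored.\<close>

definition adj_rel :: "'a set \<Rightarrow> ('a \<Rightarrow> 'a \<Rightarrow> bool) \<Rightarrow> ('a \<times> 'a) set" where
  "adj_rel V E = {(x, y). x \<in> V \<and> y \<in> V \<and> E x y}"

definition simple_graph :: "'a set \<Rightarrow> ('a \<Rightarrow> 'a \<Rightarrow> bool) \<Rightarrow> bool" where
  "simple_graph V E \<longleftrightarrow> finite V \<and> (\<forall>x\<in>V. \<forall>y\<in>V. E x y \<longrightarrow> E y x) \<and> (\<forall>x\<in>V. \<not> E x x)"

definition connected_graph :: "'a set \<Rightarrow> ('a \<Rightarrow> 'a \<Rightarrow> bool) \<Rightarrow> bool" where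
  "connected_graph V E \<longleftrightarrow> (\<forall>x\<in>V. \<forall>y\<in>V. \<exists>k. (x, y) \<in> adj_rel V E ^^ k)"

definition gdist :: "'a set \<Rightarrow> ('a \<Rightarrow> 'a \<Rightarrow> bool) \<Rightarrow> 'a \<Rightarrow> 'a \<Rightarrow> nat" where
  "gdist V E x y = (LEAST k. (x, y) \<in> adj_rel V E ^^ k)"

definition diam :: "'a set \<Rightarrow> ('a \<Rightarrow> 'a \<Rightarrow> bool) \<Rightarrow> nat" where
  "diam V E = Max {gdist V E x y | x y. x \<in> V \<and> y \<in> V}"

text \<open>K solves D K = n 1_n (vectors indexed by the vertices).\<close>
definition curv_solution :: "'a set \<Rightarrow> ('a \<Rightarrow> 'a \<Rightarrow> bool) \<Rightarrow> ('a \<Rightarrow> real) \<Rightarrow> bool" where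
  "curv_solution V E K \<longleftrightarrow>
     (\<forall>x\<in>V. (\<Sum>y\<in>V. real (gdist V E x y) * K y) = real (card V))"

definition minK :: "'a set \<Rightarrow> ('a \<Rightarrow> real) \<Rightarrow> real" where
  "minK V K = Min (K ` V)"

definition steinerberger_curvature :: "'a set \<Rightarrow> ('a \<Rightarrow> 'a \<Rightarrow> bool) \<Rightarrow> ('a \<Rightarrow> real) \<Rightarrow> bool" where
  "steinerberger_curvature V E K \<longleftrightarrow> curv_solution V E K \<and>
     (\<forall>K'. curv_solution V E K' \<longrightarrow> minK V K' \<le> minK V K)"

definition bonnet_myers_sharp :: "'a set \<Rightarrow> ('a \<Rightarrow> 'a \<Rightarrow> bool) \<Rightarrow> bool" where
  "bonnet_myers_sharp V E \<longleftrightarrow>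
     (\<exists>K. steinerberger_curvature V E K \<and> minK V K = 2 / real (diam V E))"

definition self_centered :: "'a set \<Rightarrow> ('a \<Rightarrow> 'a \<Rightarrow> bool) \<Rightarrow> bool" where
  "self_centered V E \<longleftrightarrow> (\<forall>x\<in>V. \<exists>x'\<in>V. gdist V E x x' = diam V E)"

definition interval :: "'a set \<Rightarrow> ('a \<Rightarrow> 'a \<Rightarrow> bool) \<Rightarrow> 'a \<Rightarrow> 'a \<Rightarrow> 'a set" where
  "interval V E x y = {z \<in> V. gdist V E x y = gdist V E x z + gdist V E z y}"

definition antipodal :: "'a set \<Rightarrow> ('a \<Rightarrow> 'a \<Rightarrow> bool) \<Rightarrow> bool" where
  "antipodal V E \<longleftrightarrow> (\<forall>x\<in>V. \<exists>x'\<in>V. interval V E x x' = V)"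

end

theory Submission
  imports Defs
begin

text \<open>
For a solution K of D K = n 1 and two vertices x, y, adding the rows of x and y gives
\<Sum>z (d(x,z) + d(z,y) - d(x,y)) K z = 2n - d(x,y) \<Sum>z K z, where every excess
d(x,z) + d(z,y) - d(x,y) is nonnegative. For a diametral pair this yields the
Bonnet--Myers bound min K \<le> 2/diam; if equality holds then all K z are positive and
\<Sum> K z \<ge> 2n/diam, so every excess vanishes, i.e. [x,y] = V: an antipode of x.
Conversely, in an antipodal graph the antipode map is an involution with
d(x,y) + d(x,antipode y) = diam, so summing a row of D against it shows that the
constant vector 2/diam solves D K = n 1; by the bound it is a Steinerberger curvature.
\<close>

lemma relpow_sym:
  assumes "\<And>a b. (a, b) \<in> R \<Longrightarrow> (b, a) \<in> R"
  shows "(x, y) \<in> R ^^ k \<Longrightarrow> (y, x) \<in> R ^^ k"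
proof (induction k arbitrary: x y)
  case 0
  then show ?case by simp
next
  case (Suc k)
  then obtain z where "(x, z) \<in> R ^^ k" "(z, y) \<in> R" by auto
  with Suc.IH assms have "(y, z) \<in> R" "(z, x) \<in> R ^^ k" by auto
  then show ?case by (metis relpow_Suc_I2)
qed

locale connected_simple_graph =
  fixes V :: "'a set" and E :: "'a \<Rightarrow> 'a \<Rightarrow> bool"
  assumes simple: "simple_graph V E" and connected: "connected_graph V E"
begin

abbreviation d :: "'a \<Rightarrow> 'a \<Rightarrow> nat" where "d \<equiv> gdist V E"

lemma finite_vertices: "finite V"
  using simple by (simp add: simple_graph_def)

lemma gdist_walk: "x \<in> V \<Longrightarrow> y \<in> V \<Longrightarrow> (x, y) \<in> adj_rel V E ^^ d x y"
  unfolding gdist_def using connected unfolding connected_graph_def by (meson LeastI_ex)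

lemma gdist_le_walk: "(x, y) \<in> adj_rel V E ^^ k \<Longrightarrow> d x y \<le> k"
  unfolding gdist_def by (rule Least_le)

lemma gdist_sym: "x \<in> V \<Longrightarrow> y \<in> V \<Longrightarrow> d x y = d y x"
proof -
  have "\<And>a b. (a, b) \<in> adj_rel V E \<Longrightarrow> (b, a) \<in> adj_rel V E"
    using simple by (auto simp: adj_rel_def simple_graph_def)
  moreover assume "x \<in> V" "y \<in> V"
  ultimately show ?thesis
    using gdist_walk[of x y] gdist_walk[of y x] relpow_sym gdist_le_walk by (meson le_antisym)
qed

lemma gdist_triangle: "x \<in> V \<Longrightarrow> y \<in> V \<Longrightarrow> z \<in> V \<Longrightarrow> d x z \<le> d x y + d y z"
proof -
  assume "x \<in> V" "y \<in> V" "z \<in> V"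
  then have "(x, z) \<in> adj_rel V E ^^ (d x y + d y z)"
    using gdist_walk[of x y] gdist_walk[of y z] by (auto simp: relpow_add)
  then show ?thesis by (rule gdist_le_walk)
qed

lemma gdist_eq_0_iff: "x \<in> V \<Longrightarrow> y \<in> V \<Longrightarrow> d x y = 0 \<longleftrightarrow> x = y"
  using gdist_walk[of x y] gdist_le_walk[of x x 0] by auto

lemma finite_gdist_values: "finite {d x y | x y. x \<in> V \<and> y \<in> V}"
proof -
  have "{d x y | x y. x \<in> V \<and> y \<in> V} = case_prod d ` (V \<times> V)" by auto
  then show ?thesis using finite_vertices by simp
qed

lemma gdist_le_diam: "x \<in> V \<Longrightarrow> y \<in> V \<Longrightarrow> d x y \<le> diam V E"
  unfolding diam_def using finite_gdist_values by (auto intro: Max_ge)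

lemma diam_attained:
  assumes "V \<noteq> {}"
  obtains x y where "x \<in> V" "y \<in> V" "d x y = diam V E"
proof -
  have "{d x y | x y. x \<in> V \<and> y \<in> V} \<noteq> {}" using assms by blast
  then have "diam V E \<in> {d x y | x y. x \<in> V \<and> y \<in> V}"
    unfolding diam_def using finite_gdist_values by (rule Max_in[rotated])
  then obtain x y where "x \<in> V" "y \<in> V" "diam V E = d x y" by blast
  then show ?thesis using that by simp
qed

lemma diam_pos:
  assumes "card V \<ge> 2"
  shows "diam V E > 0"
proof -
  obtain a b where "a \<in> V" "b \<in> V" "a \<noteq> b"
    using assms card_le_Suc0_iff_eq[OF finite_vertices] by fastforce
  then show ?thesis using gdist_le_diam[of a b] gdist_eq_0_iff[of a b] by linarith
qed

lemma minK_le: "z \<in> V \<Longrightarrow> minK V K \<le> K z"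
  unfolding minK_def using finite_vertices by simp

lemma card_mult_minK_le_sum: "real (card V) * minK V K \<le> sum K V"
  using sum_mono[of V "\<lambda>_. minK V K" K] minK_le by simp

lemma curv_solution_excess_sum:
  assumes K: "curv_solution V E K" and x: "x \<in> V" and y: "y \<in> V"
  shows "(\<Sum>z\<in>V. (real (d x z) + real (d z y) - real (d x y)) * K z)
           = 2 * real (card V) - real (d x y) * sum K V"
proof -
  have "(\<Sum>z\<in>V. (real (d x z) + real (d z y) - real (d x y)) * K z)
          = (\<Sum>z\<in>V. real (d x z) * K z) + (\<Sum>z\<in>V. real (d y z) * K z) - real (d x y) * sum K V"
    using gdist_sym[OF _ y]
    by (simp add: algebra_simps sum.distrib sum_subtractf sum_distrib_right)
  then show ?thesis using K x y by (simp add: curv_solution_def)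
qed

lemma excess_nonneg:
  "x \<in> V \<Longrightarrow> y \<in> V \<Longrightarrow> z \<in> V \<Longrightarrow> real (d x z) + real (d z y) - real (d x y) \<ge> 0"
  using gdist_triangle[of x z y] by simp

lemma minK_le_two_div_diam:
  assumes K: "curv_solution V E K" and n: "card V \<ge> 2"
  shows "minK V K \<le> 2 / real (diam V E)"
proof (cases "minK V K \<le> 0")
  case True
  moreover have "2 / real (diam V E) \<ge> 0" by simp
  ultimately show ?thesis by linarith
next
  case False
  have "V \<noteq> {}" using n by auto
  then obtain x y where x: "x \<in> V" and y: "y \<in> V" and xy: "d x y = diam V E"
    by (rule diam_attained)
  have "0 \<le> (\<Sum>z\<in>V. (real (d x z) + real (d z y) - real (d x y)) * K z)"
    using False excess_nonneg[OF x y] minK_le[of _ K]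
    by (intro sum_nonneg mult_nonneg_nonneg) (auto intro: order_trans[of 0 "minK V K"])
  then have "real (diam V E) * sum K V \<le> 2 * real (card V)"
    using curv_solution_excess_sum[OF K x y] xy by simp
  moreover have "real (diam V E) * (real (card V) * minK V K) \<le> real (diam V E) * sum K V"
    using card_mult_minK_le_sum by (simp add: mult_left_mono)
  ultimately have "real (card V) * (real (diam V E) * minK V K) \<le> real (card V) * 2"
    by (simp add: algebra_simps)
  then have "real (diam V E) * minK V K \<le> 2"
    using n by (simp add: mult_le_cancel_left_pos)
  then show ?thesis
    using diam_pos[OF n] by (simp add: le_divide_eq mult.commute)
qed

lemma interval_eq_vertices_if_minK_eq:
  assumes K: "curv_solution V E K" and n: "card V \<ge> 2"
    and mK: "minK V K = 2 / real (diam V E)"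
    and x: "x \<in> V" and x': "x' \<in> V" and xx': "d x x' = diam V E"
  shows "interval V E x x' = V"
proof -
  define D where "D = real (diam V E)"
  have D: "D > 0" using diam_pos[OF n] D_def by simp
  have "2 / D > 0" using D by simp
  then have K_pos: "K z > 0" if "z \<in> V" for z
    using minK_le[OF that, of K] mK unfolding D_def by linarith
  define e where "e z = (real (d x z) + real (d z x') - D) * K z" for z
  have e_nonneg: "\<forall>z\<in>V. e z \<ge> 0"
    using excess_nonneg[OF x x'] K_pos xx' by (simp add: e_def D_def less_imp_le)
  have "real (card V) * (2 / D) \<le> sum K V"
    using card_mult_minK_le_sum[of K] mK D_def by simp
  then have "2 * real (card V) \<le> D * sum K V"
    using D by (simp add: field_simps)
  then have "sum e V \<le> 0"
    using curv_solution_excess_sum[OF K x x'] xx' D by (simp add: e_def D_def)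
  then have "\<forall>z\<in>V. e z = 0"
    using sum_nonneg_eq_0_iff[OF finite_vertices] sum_nonneg e_nonneg by (metis order_antisym)
  then have "real (d x z) + real (d z x') = real (d x x')" if "z \<in> V" for z
    using bspec[OF \<open>\<forall>z\<in>V. e z = 0\<close> that] K_pos[OF that] xx' by (simp add: e_def D_def)
  then have "d x x' = d x z + d z x'" if "z \<in> V" for z
    using that of_nat_eq_iff by fastforce
  then show ?thesis unfolding interval_def by auto
qed

lemma antipodal_if_self_centered_sharp:
  assumes "self_centered V E" and "bonnet_myers_sharp V E" and n: "card V \<ge> 2"
  shows "antipodal V E"
proof -
  obtain K where K: "curv_solution V E K" and mK: "minK V K = 2 / real (diam V E)"
    using assms(2) unfolding bonnet_myers_sharp_def steinerberger_curvature_def by blast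
  show ?thesis
    unfolding antipodal_def
  proof
    fix x assume x: "x \<in> V"
    then obtain x' where "x' \<in> V" "d x x' = diam V E"
      using assms(1) unfolding self_centered_def by blast
    then show "\<exists>x'\<in>V. interval V E x x' = V"
      using interval_eq_vertices_if_minK_eq[OF K n mK x] by blast
  qed
qed

lemma interval_sym: "x \<in> V \<Longrightarrow> y \<in> V \<Longrightarrow> interval V E x y = interval V E y x"
  unfolding interval_def using gdist_sym by auto

lemma interval_eq_vertices_unique:
  assumes "x \<in> V" "a \<in> V" "b \<in> V" "interval V E x a = V" "interval V E x b = V"
  shows "a = b"
proof -
  have "a \<in> interval V E x b" "b \<in> interval V E x a"
    using assms by simp_all
  then have "d x a = d x b + d b a" "d x b = d x a + d a b"
    unfolding interval_def by simp_all
  then have "d a b = 0" by linarith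
  then show ?thesis using gdist_eq_0_iff assms(2,3) by blast
qed

definition antipode :: "'a \<Rightarrow> 'a" where
  "antipode x = (SOME x'. x' \<in> V \<and> interval V E x x' = V)"

context
  assumes antipodal: "antipodal V E"
begin

lemma antipode_in: "x \<in> V \<Longrightarrow> antipode x \<in> V"
  and interval_antipode: "x \<in> V \<Longrightarrow> interval V E x (antipode x) = V"
  using someI_ex[of "\<lambda>x'. x' \<in> V \<and> interval V E x x' = V"] antipodal
  unfolding antipode_def antipodal_def by auto

lemma gdist_antipode_split: "x \<in> V \<Longrightarrow> z \<in> V \<Longrightarrow> d x (antipode x) = d x z + d z (antipode x)"
  using interval_antipode unfolding interval_def by blast

lemma antipode_antipode: "x \<in> V \<Longrightarrow> antipode (antipode x) = x"
proof -
  assume x: "x \<in> V"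
  have "interval V E (antipode x) x = V"
    using interval_sym[OF x antipode_in[OF x]] interval_antipode[OF x] by simp
  then show ?thesis
    using interval_eq_vertices_unique[OF antipode_in[OF x] antipode_in[OF antipode_in[OF x]] x]
      interval_antipode[OF antipode_in[OF x]] by simp
qed

lemma gdist_antipode: "x \<in> V \<Longrightarrow> d x (antipode x) = diam V E"
proof -
  assume x: "x \<in> V"
  then have "V \<noteq> {}" by auto
  then obtain u v where u: "u \<in> V" and v: "v \<in> V" and uv: "d u v = diam V E"
    by (rule diam_attained)
  have "d u (antipode u) = diam V E"
    using gdist_antipode_split[OF u v] uv gdist_le_diam[OF u antipode_in[OF u]] by simp
  moreover have "d x (antipode x) = d x u + d u (antipode x)"
    and "d u (antipode u) = d u x + d x (antipode u)"
    and "d u (antipode u) = d u (antipode x) + d (antipode x) (antipode u)"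
    and "d x (antipode x) = d x (antipode u) + d (antipode u) (antipode x)"
    using gdist_antipode_split x u antipode_in by blast+
  moreover have "d x u = d u x" "d (antipode x) (antipode u) = d (antipode u) (antipode x)"
    using gdist_sym x u antipode_in by blast+
  ultimately show ?thesis by linarith
qed

lemma self_centered_if_antipodal: "self_centered V E"
  unfolding self_centered_def using gdist_antipode antipode_in by blast

lemma gdist_add_gdist_antipode:
  "x \<in> V \<Longrightarrow> y \<in> V \<Longrightarrow> d x y + d x (antipode y) = diam V E"
  using gdist_antipode_split[of y x] gdist_antipode gdist_sym by simp

lemma row_sum_gdist: "x \<in> V \<Longrightarrow> 2 * (\<Sum>y\<in>V. real (d x y)) = real (card V) * real (diam V E)"
proof -
  assume x: "x \<in> V"
  have "(\<Sum>y\<in>V. real (d x y)) = (\<Sum>y\<in>V. real (d x (antipode y)))"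
    by (rule sum.reindex_bij_witness[of _ antipode antipode])
      (use antipode_antipode antipode_in in auto)
  moreover have "(\<Sum>y\<in>V. real (d x y)) + (\<Sum>y\<in>V. real (d x (antipode y)))
               = real (card V) * real (diam V E)"
  proof -
    have "real (d x y) + real (d x (antipode y)) = real (diam V E)" if "y \<in> V" for y
      using gdist_add_gdist_antipode[OF x that] by linarith
    then show ?thesis by (simp add: sum.distrib[symmetric])
  qed
  ultimately show ?thesis by linarith
qed

lemma curv_solution_const:
  assumes "card V \<ge> 2"
  shows "curv_solution V E (\<lambda>_. 2 / real (diam V E))"
  unfolding curv_solution_def
proof
  fix x assume "x \<in> V"
  then have "(\<Sum>y\<in>V. real (d x y)) * (2 / real (diam V E)) = real (card V)"
    using row_sum_gdist diam_pos[OF assms] by (simp add: field_simps)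
  then show "(\<Sum>y\<in>V. real (d x y) * (2 / real (diam V E))) = real (card V)"
    by (simp only: sum_distrib_right)
qed

lemma bonnet_myers_sharp_if_antipodal:
  assumes n: "card V \<ge> 2"
  shows "bonnet_myers_sharp V E"
proof -
  have "V \<noteq> {}" using n by auto
  then have "minK V (\<lambda>_. 2 / real (diam V E)) = 2 / real (diam V E)"
    by (simp add: minK_def image_constant_conv)
  then show ?thesis
    unfolding bonnet_myers_sharp_def steinerberger_curvature_def
    using curv_solution_const[OF n] minK_le_two_div_diam[OF _ n] by metis
qed

end

end

theorem mainTheorem9:
  fixes V :: "'a set" and E :: "'a \<Rightarrow> 'a \<Rightarrow> bool"
  assumes "simple_graph V E" and "connected_graph V E" and "card V \<ge> 2"
    and "\<exists>K. curv_solution V E K"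
  shows "antipodal V E \<longleftrightarrow> (self_centered V E \<and> bonnet_myers_sharp V E)"
proof -
  interpret connected_simple_graph V E
    using assms(1,2) by unfold_locales
  show ?thesis
    using self_centered_if_antipodal bonnet_myers_sharp_if_antipodal
      antipodal_if_self_centered_sharp assms(3) by blast
qed

end
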